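(* Let $m\ge 2$, let $M$ be the graph consisting of $m$ pairwise disjoint edges, and let $G$ be a simple graph with $m$ edges that is not a matching (i.e. some vertex of $G$ has degree at least $2$). Then (1) $c_s(M)>c_s(G)$ for every $s\in\{2,\dots,m\}$, and (2) $\lambda(M)\le\lambda(G)$ and $\Phi(\lambda,M)>\Phi(\lambda,G)$ for every real $\lambda\ge\lambda(G)$.
   Context: All graphs are finite, undirected, without loops. For a graph $G$ on $n$ vertices let $L(G)=D(G)-A(G)$ be its Laplacian matrix ($D(G)$ the diagonal matrix of vertex degrees, $A(G)$ the adjacency matrix), with eigenvalues $0=\lambda_0(G)\le\lambda_1(G)\le\dots\le\lambda_{n-1}(G)$; put $\lambda(G)=\lambda_{n-1}(G)$. Write $\det(\lambda I-L(G))=\lambda P(\lambda,G)$ with $P(\lambda,G)=\sum_{s=0}^{n-1}(-1)^s c_s(G)\lambda^{n-1-s}$ (the Laplacian polynomial); so $c_s(G)$ is the $s$-th elementary symmetric polynomial in $\lambda_1(G),\dots,\lambda_{n-1}(G)$. Equivalently $c_s(G)=\sum_F\gamma(F)$, the sum over spanning forests $F$ of $G$ with $s$ edges, where $\gamma(F)$ is the product of the numbers of vertices of the components of $F$; in particular $c_s(G)$ does not change when isolated vertices are added, and we set $c_s(G)=0$ for $s\ge n$. For a graph $G$ with $n$ vertices and $m$ edges put $\Phi(\lambda,G)=\lambda^{m-n+1}P(\lambda,G)$ (for $\lambda>0$). *)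

theory Defs
  imports "Jordan_Normal_Form.Char_Poly"
begin

definition simple_graph :: "nat \<Rightarrow> nat set set \<Rightarrow> bool" where
  "simple_graph n E \<longleftrightarrow> E \<subseteq> {e. \<exists>i j. i < n \<and> j < n \<and> i \<noteq> j \<and> e = {i, j}}"

definition degree :: "nat set set \<Rightarrow> nat \<Rightarrow> nat" where
  "degree E v = card {e \<in> E. v \<in> e}"

definition laplacian :: "nat \<Rightarrow> nat set set \<Rightarrow> real mat" where
  "laplacian n E = mat n n (\<lambda>(i, j). if i = j then real (degree E i)
                                      else if {i, j} \<in> E then -1 else 0)"

definition lap_poly :: "nat \<Rightarrow> nat set set \<Rightarrow> real poly" where
  "lap_poly n E = char_poly (laplacian n E) div [:0, 1:]"

definition lap_coeff :: "nat \<Rightarrow> nat set set \<Rightarrow> nat \<Rightarrow> real" where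
  "lap_coeff n E s = (if s < n then (-1) ^ s * coeff (lap_poly n E) (n - 1 - s) else 0)"

definition lap_lambda :: "nat \<Rightarrow> nat set set \<Rightarrow> real" where
  "lap_lambda n E = Max {x. eigenvalue (laplacian n E) x}"

definition lap_Phi :: "nat \<Rightarrow> nat set set \<Rightarrow> real \<Rightarrow> real" where
  "lap_Phi n E x = x powi (int (card E) - int n + 1) * poly (lap_poly n E) x"

definition matching_edges :: "nat \<Rightarrow> nat set set" where
  "matching_edges m = {{2 * i, 2 * i + 1} | i. i < m}"

end

theory Submission
  imports Defs "Jordan_Normal_Form.Schur_Decomposition"
begin

text \<open>
  Write \<open>L(G) = B B\<^sup>T\<close> with \<open>B\<close> the oriented incidence matrix (\<open>n \<times> m\<close>) and let
  \<open>K = B\<^sup>T B\<close> be the edge Gram matrix. By Sylvester's identity \<open>\<chi>\<^sub>L(X) X\<^sup>m = X\<^sup>n \<chi>\<^sub>K(X)\<close>, so the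
  \<open>m\<close> eigenvalues \<open>ks\<close> of \<open>K\<close> (the "edge spectrum", nonnegative since \<open>K\<close> is a Gram matrix)
  determine everything: \<open>c\<^sub>s(G) = e\<^sub>s(ks)\<close>, \<open>\<Phi>(x, G) = \<Prod>(x - k)\<close> and \<open>\<lambda>(G) = max ks\<close>.
  Since \<open>K\<close> has diagonal \<open>2\<close>, \<open>\<Sum> ks = tr K = 2m\<close>, and \<open>\<Sum>(k - 2)\<^sup>2 = tr K\<^sup>2 - 4m\<close> is the sum
  of squares of the off-diagonal entries of \<open>K\<close>, which vanishes exactly for matchings. So
  the matching has edge spectrum \<open>2, \<dots>, 2\<close>, while any other graph has a non-constant edge
  spectrum with the same mean \<open>2\<close>. A smoothing argument (move two entries towards the mean)
  shows that constant lists strictly maximise \<open>e\<^sub>s\<close> (\<open>s \<ge> 2\<close>) and \<open>\<Prod>(x - k)\<close>.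
\<close>

section \<open>Elementary symmetric functions of a list\<close>

fun esym :: "real list \<Rightarrow> nat \<Rightarrow> real" where
  "esym xs 0 = 1"
| "esym [] (Suc k) = 0"
| "esym (x # xs) (Suc k) = esym xs (Suc k) + x * esym xs k"

lemma esym_eq_0_beyond_length: "length xs < k \<Longrightarrow> esym xs k = 0"
  by (induction xs k rule: esym.induct) auto

lemma esym_Suc_Suc:
  "esym (a # b # zs) (Suc (Suc k)) =
     esym zs (Suc (Suc k)) + (a + b) * esym zs (Suc k) + a * b * esym zs k"
  by (simp add: algebra_simps)

lemma coeff_prod_linear_factors:
  assumes "k \<le> length xs"
  shows "coeff (\<Prod>x\<leftarrow>xs. [:-x, 1:]) (length xs - k) = (-1) ^ k * esym xs k"
  using assms
proof (induction xs arbitrary: k)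
  case Nil
  then show ?case by simp
next
  case (Cons x xs)
  let ?p = "\<Prod>x\<leftarrow>xs. [:-x, 1:]"
  have deg: "Polynomial.degree ?p = length xs"
    by (subst degree_prod_list_eq) (auto simp: o_def sum_list_triv)
  have split: "(\<Prod>x\<leftarrow>x # xs. [:-x, 1:]) = pCons 0 ?p - Polynomial.smult x ?p"
    by (simp add: algebra_simps)
  show ?case
  proof (cases k)
    case 0
    have "coeff ?p (length xs) = 1" using Cons.IH[of 0] by simp
    moreover have "coeff ?p (Suc (length xs)) = 0" using deg by (simp add: coeff_eq_0)
    ultimately show ?thesis using 0 by (simp add: split)
  next
    case (Suc j)
    show ?thesis
    proof (cases "j = length xs")
      case True
      then show ?thesis using Suc Cons.IH[of j] by (simp add: split esym_eq_0_beyond_length)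
    next
      case False
      with Suc Cons.prems have j: "j < length xs" by simp
      then have "length (x # xs) - k = Suc (length xs - Suc j)" using Suc by simp
      then show ?thesis using Suc Cons.IH[of j] Cons.IH[of "Suc j"] j
        by (simp add: split algebra_simps)
    qed
  qed
qed

lemma esym_mset_cong:
  assumes "mset xs = mset ys"
  shows "esym xs k = esym ys k"
proof -
  have len: "length xs = length ys" using assms mset_eq_length by blast
  have "(\<Prod>x\<leftarrow>xs. [:-x, 1:]) = (\<Prod>x\<leftarrow>ys. [:-x, 1:])"
    by (metis assms mset_map prod_mset_prod_list)
  then show ?thesis
    using coeff_prod_linear_factors[of k xs] coeff_prod_linear_factors[of k ys] len
    by (cases "k \<le> length xs") (simp_all add: esym_eq_0_beyond_length)
qed

lemma esym_nonneg: "\<forall>z\<in>set xs. 0 \<le> z \<Longrightarrow> 0 \<le> esym xs k"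
  by (induction xs k rule: esym.induct) auto

lemma esym_eq_0_Suc:
  assumes "\<forall>z\<in>set xs. 0 \<le> z" and "esym xs k = 0"
  shows "esym xs (Suc k) = 0"
  using assms
proof (induction xs arbitrary: k)
  case (Cons x xs)
  show ?case
  proof (cases k)
    case (Suc j)
    have "0 \<le> esym xs (Suc j)" "0 \<le> x * esym xs j"
      using Cons.prems(1) esym_nonneg[of xs] by simp_all
    then have "esym xs (Suc j) = 0" using Cons.prems(2) Suc by simp
    then show ?thesis using Cons.IH Cons.prems(1) Suc by simp
  qed (use Cons.prems in simp)
qed simp

lemma esym_replicate: "esym (replicate m c) k = of_nat (m choose k) * c ^ k"
proof (induction m arbitrary: k)
  case 0
  then show ?case by (cases k) auto
next
  case (Suc m)
  then show ?case by (cases k) (auto simp: algebra_simps)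
qed

section \<open>Smoothing: replacing two entries by entries closer to the mean\<close>

text \<open>Let \<open>F\<close> be a permutation-invariant function of a list that does not decrease when two
  entries \<open>a \<le> b\<close> are replaced by \<open>c\<close> and \<open>a + b - c\<close> with \<open>a \<le> c \<le> b\<close>. Repeatedly
  moving one entry onto the mean \<open>\<mu>\<close> shows that the constant list is a maximiser of \<open>F\<close>
  among lists with mean \<open>\<mu>\<close>; a strict first step makes the inequality strict.\<close>

lemma exists_below_above_mean:
  fixes xs :: "real list"
  assumes mean: "sum_list xs = of_nat (length xs) * \<mu>" and z: "z \<in> set xs" "z \<noteq> \<mu>"
  shows "\<exists>a\<in>set xs. \<exists>b\<in>set xs. a < \<mu> \<and> \<mu> < b"
proof -
  have zero_if_nonneg: "f z = 0"
    if "\<forall>y\<in>set xs. 0 \<le> f y" and "(\<Sum>y\<leftarrow>xs. f y) = 0" for f :: "real \<Rightarrow> real"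
    using that z sum_list_nonneg_eq_0_iff[of "map f xs"] by auto
  have up: "(\<Sum>y\<leftarrow>xs. y - \<mu>) = 0" and down: "(\<Sum>y\<leftarrow>xs. \<mu> - y) = 0"
    using mean by (simp_all add: sum_list_subtractf sum_list_triv)
  have "\<exists>a\<in>set xs. a < \<mu>"
    using zero_if_nonneg[of "\<lambda>y. y - \<mu>"] up z(2) by force
  moreover have "\<exists>b\<in>set xs. \<mu> < b"
    using zero_if_nonneg[of "\<lambda>y. \<mu> - y"] down z(2) by force
  ultimately show ?thesis by blast
qed

lemma smoothing_step:
  fixes xs :: "real list"
  assumes mean: "sum_list xs = of_nat (length xs) * \<mu>" and z: "z \<in> set xs" "z \<noteq> \<mu>"
    and P_xs: "\<forall>z\<in>set xs. P z" and between: "\<And>a b c. P a \<Longrightarrow> P b \<Longrightarrow> a \<le> c \<Longrightarrow> c \<le> b \<Longrightarrow> P c"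
  obtains a b zs where "a < \<mu>" "\<mu> < b" "mset xs = mset (a # b # zs)"
    "\<forall>z\<in>set (a # b # zs). P z" "\<forall>z\<in>set (\<mu> # (a + b - \<mu>) # zs). P z"
    "sum_list (\<mu> # (a + b - \<mu>) # zs) = of_nat (length (\<mu> # (a + b - \<mu>) # zs)) * \<mu>"
    "length (\<mu> # (a + b - \<mu>) # zs) = length xs"
proof -
  obtain a b where ab: "a \<in> set xs" "b \<in> set xs" "a < \<mu>" "\<mu> < b"
    using exists_below_above_mean[OF mean z] by blast
  define zs where "zs = remove1 b (remove1 a xs)"
  have b: "b \<in> set (remove1 a xs)" using ab by (simp add: in_set_remove1)
  have "mset xs = add_mset a (mset (remove1 a xs))"
    using ab(1) by (simp add: mset_remove1 insert_DiffM)
  also have "mset (remove1 a xs) = add_mset b (mset zs)"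
    using b unfolding zs_def by (metis insert_DiffM mset_remove1 set_mset_mset)
  finally have ms: "mset xs = mset (a # b # zs)" by simp
  have set: "set xs = set (a # b # zs)" by (metis ms set_mset_mset)
  have len: "length xs = length (a # b # zs)" by (metis ms size_mset)
  have sum: "sum_list xs = sum_list (a # b # zs)" by (metis ms sum_mset_sum_list)
  show thesis
  proof (rule that[OF ab(3,4) ms])
    show "\<forall>z\<in>set (a # b # zs). P z" using P_xs set by simp
    show "\<forall>z\<in>set (\<mu> # (a + b - \<mu>) # zs). P z"
      using P_xs set ab between[of a b \<mu>] between[of a b "a + b - \<mu>"] by auto
    show "sum_list (\<mu> # (a + b - \<mu>) # zs) = of_nat (length (\<mu> # (a + b - \<mu>) # zs)) * \<mu>"
      using mean sum len by simp
    show "length (\<mu> # (a + b - \<mu>) # zs) = length xs" using len by simp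
  qed
qed

lemma smoothing:
  fixes F :: "real list \<Rightarrow> real" and P :: "real \<Rightarrow> bool"
  assumes perm: "\<And>xs ys. mset xs = mset ys \<Longrightarrow> F xs = F ys"
    and step: "\<And>a b c zs. \<forall>z\<in>set (a # b # zs). P z \<Longrightarrow> a \<le> c \<Longrightarrow> c \<le> b \<Longrightarrow>
                 F (a # b # zs) \<le> F (c # (a + b - c) # zs)"
    and between: "\<And>a b c. P a \<Longrightarrow> P b \<Longrightarrow> a \<le> c \<Longrightarrow> c \<le> b \<Longrightarrow> P c"
    and "\<forall>z\<in>set xs. P z" and "sum_list xs = of_nat (length xs) * \<mu>"
  shows "F xs \<le> F (replicate (length xs) \<mu>)"
  using assms(4,5)
proof (induction "length (filter (\<lambda>z. z \<noteq> \<mu>) xs)" arbitrary: xs rule: less_induct)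
  case less
  show ?case
  proof (cases "\<forall>z\<in>set xs. z = \<mu>")
    case True
    then show ?thesis using replicate_length_same[of xs \<mu>] by simp
  next
    case False
    then obtain z where z: "z \<in> set xs" "z \<noteq> \<mu>" by blast
    obtain a b zs where ab: "a < \<mu>" "\<mu> < b" and ms: "mset xs = mset (a # b # zs)"
      and P_ab: "\<forall>z\<in>set (a # b # zs). P z" and P_ys: "\<forall>z\<in>set (\<mu> # (a + b - \<mu>) # zs). P z"
      and mean_ys: "sum_list (\<mu> # (a + b - \<mu>) # zs) = of_nat (length (\<mu> # (a + b - \<mu>) # zs)) * \<mu>"
      and len: "length (\<mu> # (a + b - \<mu>) # zs) = length xs"
      using smoothing_step[OF less.prems(2) z less.prems(1) between] .
    have "length (filter (\<lambda>z. z \<noteq> \<mu>) xs) = length (filter (\<lambda>z. z \<noteq> \<mu>) (a # b # zs))"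
      using ms by (metis mset_filter size_mset)
    then have fewer: "length (filter (\<lambda>z. z \<noteq> \<mu>) (\<mu> # (a + b - \<mu>) # zs))
        < length (filter (\<lambda>z. z \<noteq> \<mu>) xs)"
      using ab by auto
    have "F xs = F (a # b # zs)" using perm ms by blast
    also have "\<dots> \<le> F (\<mu> # (a + b - \<mu>) # zs)" using step[of a b zs \<mu>] P_ab ab by auto
    also have "\<dots> \<le> F (replicate (length xs) \<mu>)"
      using less.hyps[OF fewer P_ys mean_ys] unfolding len .
    finally show ?thesis .
  qed
qed

lemma smoothing_strict:
  fixes F :: "real list \<Rightarrow> real" and P :: "real \<Rightarrow> bool"
  assumes perm: "\<And>xs ys. mset xs = mset ys \<Longrightarrow> F xs = F ys"
    and step: "\<And>a b c zs. \<forall>z\<in>set (a # b # zs). P z \<Longrightarrow> a \<le> c \<Longrightarrow> c \<le> b \<Longrightarrow>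
                 F (a # b # zs) \<le> F (c # (a + b - c) # zs)"
    and between: "\<And>a b c. P a \<Longrightarrow> P b \<Longrightarrow> a \<le> c \<Longrightarrow> c \<le> b \<Longrightarrow> P c"
    and strict: "\<And>a b zs. \<forall>z\<in>set (a # b # zs). P z \<Longrightarrow> a < \<mu> \<Longrightarrow> \<mu> < b \<Longrightarrow>
                 0 < F (a # b # zs) \<Longrightarrow> F (a # b # zs) < F (\<mu> # (a + b - \<mu>) # zs)"
    and pos: "0 < F (replicate (length xs) \<mu>)"
    and P_xs: "\<forall>z\<in>set xs. P z" and mean: "sum_list xs = of_nat (length xs) * \<mu>"
    and z: "z \<in> set xs" "z \<noteq> \<mu>"
  shows "F xs < F (replicate (length xs) \<mu>)"
proof (cases "0 < F xs")
  case True
  obtain a b zs where ab: "a < \<mu>" "\<mu> < b" and ms: "mset xs = mset (a # b # zs)"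
    and P_ab: "\<forall>z\<in>set (a # b # zs). P z" and P_ys: "\<forall>z\<in>set (\<mu> # (a + b - \<mu>) # zs). P z"
    and mean_ys: "sum_list (\<mu> # (a + b - \<mu>) # zs) = of_nat (length (\<mu> # (a + b - \<mu>) # zs)) * \<mu>"
    and len: "length (\<mu> # (a + b - \<mu>) # zs) = length xs"
    using smoothing_step[OF mean z P_xs between] .
  have "F xs = F (a # b # zs)" using perm ms by blast
  also have "\<dots> < F (\<mu> # (a + b - \<mu>) # zs)" using strict[OF P_ab ab] True perm[OF ms] by simp
  also have "\<dots> \<le> F (replicate (length xs) \<mu>)"
    using smoothing[OF perm step between P_ys mean_ys] unfolding len .
  finally show ?thesis .
qed (use pos in simp)

lemma pair_product_increase:
  fixes a b c :: real
  assumes "a \<le> c" "c \<le> b"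
  shows "a * b \<le> c * (a + b - c)"
proof -
  have "0 \<le> (c - a) * (b - c)" using assms by simp
  then show ?thesis by (simp add: algebra_simps)
qed

lemma pair_product_increase_strict:
  fixes a b c :: real
  assumes "a < c" "c < b"
  shows "a * b < c * (a + b - c)"
proof -
  have "0 < (c - a) * (b - c)" using assms by simp
  then show ?thesis by (simp add: algebra_simps)
qed

lemma esym_pair_smoothing:
  assumes "\<forall>z\<in>set zs. 0 \<le> z" "a \<le> c" "c \<le> b"
  shows "esym (a # b # zs) s \<le> esym (c # (a + b - c) # zs) s"
proof (cases "s < 2")
  case True
  then consider "s = 0" | "s = 1" by linarith
  then show ?thesis by cases (simp_all add: algebra_simps)
next
  case False
  then have "s = Suc (Suc (s - 2))" by simp
  then obtain k where s: "s = Suc (Suc k)" by blast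
  have "a * b * esym zs k \<le> c * (a + b - c) * esym zs k"
    using pair_product_increase[OF assms(2,3)] esym_nonneg[OF assms(1)]
    by (rule mult_right_mono)
  then show ?thesis unfolding s esym_Suc_Suc by simp
qed

lemma esym_pair_smoothing_strict:
  assumes "\<forall>z\<in>set zs. 0 \<le> z" "a < c" "c < b" "0 < esym (a # b # zs) (Suc (Suc k))"
  shows "esym (a # b # zs) (Suc (Suc k)) < esym (c # (a + b - c) # zs) (Suc (Suc k))"
proof -
  have "esym zs k \<noteq> 0"
  proof
    assume "esym zs k = 0"
    then have "esym zs (Suc k) = 0" "esym zs (Suc (Suc k)) = 0"
      using esym_eq_0_Suc[OF assms(1)] by blast+
    with \<open>esym zs k = 0\<close> show False using assms(4) unfolding esym_Suc_Suc by simp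
  qed
  then have "0 < esym zs k" using esym_nonneg[OF assms(1), of k] by simp
  then have "a * b * esym zs k < c * (a + b - c) * esym zs k"
    using pair_product_increase_strict[OF assms(2,3)] by (rule mult_strict_right_mono[rotated])
  then show ?thesis unfolding esym_Suc_Suc by simp
qed

lemma esym_lt_replicate_mean:
  fixes xs :: "real list"
  assumes nonneg: "\<forall>z\<in>set xs. 0 \<le> z" and mean: "sum_list xs = of_nat (length xs) * \<mu>"
    and z: "z \<in> set xs" "z \<noteq> \<mu>" and s: "2 \<le> s" "s \<le> length xs"
  shows "esym xs s < esym (replicate (length xs) \<mu>) s"
proof -
  have "s = Suc (Suc (s - 2))" using s(1) by simp
  then obtain k where s_eq: "s = Suc (Suc k)" by blast
  obtain a where a: "a \<in> set xs" "a < \<mu>" using exists_below_above_mean[OF mean z] by blast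
  have "0 < \<mu>" using nonneg a by fastforce
  then have pos: "0 < esym (replicate (length xs) \<mu>) s"
    using s(2) by (simp add: esym_replicate)
  show ?thesis
  proof (rule smoothing_strict[where F = "\<lambda>l. esym l s" and P = "\<lambda>z. 0 \<le> z", OF _ _ _ _ pos nonneg mean z])
    show "\<And>xs ys. mset xs = mset ys \<Longrightarrow> esym xs s = esym ys s" by (rule esym_mset_cong)
    show "\<And>a b c zs. \<forall>z\<in>set (a # b # zs). 0 \<le> z \<Longrightarrow> a \<le> c \<Longrightarrow> c \<le> b \<Longrightarrow>
            esym (a # b # zs) s \<le> esym (c # (a + b - c) # zs) s"
      by (rule esym_pair_smoothing) auto
    show "\<And>a b zs. \<forall>z\<in>set (a # b # zs). 0 \<le> z \<Longrightarrow> a < \<mu> \<Longrightarrow> \<mu> < b \<Longrightarrow>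
            0 < esym (a # b # zs) s \<Longrightarrow> esym (a # b # zs) s < esym (\<mu> # (a + b - \<mu>) # zs) s"
      unfolding s_eq by (rule esym_pair_smoothing_strict) auto
  qed auto
qed

lemma prod_pair_smoothing:
  fixes x :: real
  assumes "\<forall>z\<in>set zs. z \<le> x" "a \<le> c" "c \<le> b"
  shows "(\<Prod>z\<leftarrow>a # b # zs. x - z) \<le> (\<Prod>z\<leftarrow>c # (a + b - c) # zs. x - z)"
proof -
  have "0 \<le> (\<Prod>z\<leftarrow>zs. x - z)" using assms(1) by (intro prod_list_nonneg) auto
  moreover have "(x - a) * (x - b) \<le> (x - c) * (x - (a + b - c))"
    using pair_product_increase[OF assms(2,3)] by (simp add: algebra_simps)
  ultimately show ?thesis by (simp add: mult.assoc[symmetric] mult_right_mono)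
qed

lemma prod_pair_smoothing_strict:
  fixes x :: real
  assumes "\<forall>z\<in>set (a # b # zs). z \<le> x" "a < c" "c < b"
    and "0 < (\<Prod>z\<leftarrow>a # b # zs. x - z)"
  shows "(\<Prod>z\<leftarrow>a # b # zs. x - z) < (\<Prod>z\<leftarrow>c # (a + b - c) # zs. x - z)"
proof -
  have "0 \<le> (x - a) * (x - b)" using assms(1) by simp
  moreover have "0 < (x - a) * (x - b) * (\<Prod>z\<leftarrow>zs. x - z)"
    using assms(4) by (simp add: mult.assoc)
  ultimately have "0 < (\<Prod>z\<leftarrow>zs. x - z)" by (simp add: zero_less_mult_iff)
  moreover have "(x - a) * (x - b) < (x - c) * (x - (a + b - c))"
    using pair_product_increase_strict[OF assms(2,3)] by (simp add: algebra_simps)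
  ultimately show ?thesis by (simp add: mult.assoc[symmetric] mult_strict_right_mono)
qed

lemma prod_lt_replicate_mean:
  fixes xs :: "real list"
  assumes le: "\<forall>z\<in>set xs. z \<le> x" and mean: "sum_list xs = of_nat (length xs) * \<mu>"
    and z: "z \<in> set xs" "z \<noteq> \<mu>"
  shows "(\<Prod>z\<leftarrow>xs. x - z) < (x - \<mu>) ^ length xs"
proof -
  obtain b where "b \<in> set xs" "\<mu> < b" using exists_below_above_mean[OF mean z] by blast
  then have pos: "0 < (\<Prod>z\<leftarrow>replicate (length xs) \<mu>. x - z)"
    using le by force
  have "(\<Prod>z\<leftarrow>xs. x - z) < (\<Prod>z\<leftarrow>replicate (length xs) \<mu>. x - z)"
  proof (rule smoothing_strict[where F = "\<lambda>l. \<Prod>z\<leftarrow>l. x - z" and P = "\<lambda>z. z \<le> x", OF _ _ _ _ pos le mean z])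
    show "\<And>xs ys. mset xs = mset ys \<Longrightarrow> (\<Prod>z\<leftarrow>xs. x - z) = (\<Prod>z\<leftarrow>ys. x - z)"
      by (metis mset_map prod_mset_prod_list)
    show "\<And>a b c zs. \<forall>z\<in>set (a # b # zs). z \<le> x \<Longrightarrow> a \<le> c \<Longrightarrow> c \<le> b \<Longrightarrow>
            (\<Prod>z\<leftarrow>a # b # zs. x - z) \<le> (\<Prod>z\<leftarrow>c # (a + b - c) # zs. x - z)"
      by (rule prod_pair_smoothing) auto
    show "\<And>a b zs. \<forall>z\<in>set (a # b # zs). z \<le> x \<Longrightarrow> a < \<mu> \<Longrightarrow> \<mu> < b \<Longrightarrow>
            0 < (\<Prod>z\<leftarrow>a # b # zs. x - z) \<Longrightarrow>
            (\<Prod>z\<leftarrow>a # b # zs. x - z) < (\<Prod>z\<leftarrow>\<mu> # (a + b - \<mu>) # zs. x - z)"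
      by (rule prod_pair_smoothing_strict)
  qed auto
  then show ?thesis by simp
qed

section \<open>Linear algebra\<close>

text \<open>The proof compares the
  determinant of the block matrix \<open>[[x I, A], [C, I]]\<close>, multiplied by block-triangular
  matrices on either side, with both Schur complements \<open>x I - A C\<close> and \<open>x I - C A\<close>.\<close>

lemma det_block_schur_complements:
  fixes A C :: "'a::idom mat" and x :: 'a
  assumes A: "A \<in> carrier_mat n m" and C: "C \<in> carrier_mat m n"
  defines "X \<equiv> four_block_mat (x \<cdot>\<^sub>m 1\<^sub>m n) A C (1\<^sub>m m)"
  shows "det X = det (x \<cdot>\<^sub>m 1\<^sub>m n - A * C)"
    and "det X * x ^ m = x ^ n * det (x \<cdot>\<^sub>m 1\<^sub>m m - C * A)"
proof -
  define Z where "Z = four_block_mat (1\<^sub>m n) (- A) (0\<^sub>m m n) (1\<^sub>m m)"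
  define W where "W = four_block_mat (1\<^sub>m n) (- A) (0\<^sub>m m n) (x \<cdot>\<^sub>m 1\<^sub>m m)"
  have X: "X \<in> carrier_mat (n + m) (n + m)" and Z: "Z \<in> carrier_mat (n + m) (n + m)"
    and W: "W \<in> carrier_mat (n + m) (n + m)"
    unfolding X_def Z_def W_def using A C by auto
  have det_Z: "det Z = 1"
    unfolding Z_def using A by (subst det_four_block_mat_lower_left_zero) auto
  have det_W: "det W = x ^ m"
    unfolding W_def using A by (subst det_four_block_mat_lower_left_zero) auto
  have "Z * X = four_block_mat (1\<^sub>m n * (x \<cdot>\<^sub>m 1\<^sub>m n) + - A * C) (1\<^sub>m n * A + - A * 1\<^sub>m m)
      (0\<^sub>m m n * (x \<cdot>\<^sub>m 1\<^sub>m n) + 1\<^sub>m m * C) (0\<^sub>m m n * A + 1\<^sub>m m * 1\<^sub>m m)"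
    unfolding Z_def X_def by (rule mult_four_block_mat) (use A C in auto)
  also have "\<dots> = four_block_mat (x \<cdot>\<^sub>m 1\<^sub>m n - A * C) (0\<^sub>m n m) C (1\<^sub>m m)"
    using A C by (intro cong_four_block_mat eq_matI) auto
  finally have ZX: "Z * X = four_block_mat (x \<cdot>\<^sub>m 1\<^sub>m n - A * C) (0\<^sub>m n m) C (1\<^sub>m m)" .
  have "det Z * det X = det (x \<cdot>\<^sub>m 1\<^sub>m n - A * C)"
    unfolding det_mult[OF Z X, symmetric] ZX using A C
    by (subst det_four_block_mat_upper_right_zero) auto
  then show det_X: "det X = det (x \<cdot>\<^sub>m 1\<^sub>m n - A * C)" using det_Z by simp
  have "X * W = four_block_mat ((x \<cdot>\<^sub>m 1\<^sub>m n) * 1\<^sub>m n + A * 0\<^sub>m m n)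
      ((x \<cdot>\<^sub>m 1\<^sub>m n) * - A + A * (x \<cdot>\<^sub>m 1\<^sub>m m))
      (C * 1\<^sub>m n + 1\<^sub>m m * 0\<^sub>m m n) (C * - A + 1\<^sub>m m * (x \<cdot>\<^sub>m 1\<^sub>m m))"
    unfolding W_def X_def by (rule mult_four_block_mat) (use A C in auto)
  also have "\<dots> = four_block_mat (x \<cdot>\<^sub>m 1\<^sub>m n) (0\<^sub>m n m) C (x \<cdot>\<^sub>m 1\<^sub>m m - C * A)"
    using A C by (intro cong_four_block_mat eq_matI)
      (auto simp: mult_smult_assoc_mat[OF one_carrier_mat A] mult_smult_distrib[OF A one_carrier_mat])
  finally have XW: "X * W = four_block_mat (x \<cdot>\<^sub>m 1\<^sub>m n) (0\<^sub>m n m) C (x \<cdot>\<^sub>m 1\<^sub>m m - C * A)" .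
  have "det X * det W = x ^ n * det (x \<cdot>\<^sub>m 1\<^sub>m m - C * A)"
    unfolding det_mult[OF X W, symmetric] XW using A C
    by (subst det_four_block_mat_upper_right_zero) auto
  then show "det X * x ^ m = x ^ n * det (x \<cdot>\<^sub>m 1\<^sub>m m - C * A)" using det_W by simp
qed

text \<open>Applied to the constant-polynomial lifts of \<open>A\<close> and \<open>C\<close> with \<open>x = X\<close>.\<close>
lemma char_poly_mult_swap:
  fixes A C :: "'a::idom mat"
  assumes A: "A \<in> carrier_mat n m" and C: "C \<in> carrier_mat m n"
  shows "char_poly (A * C) * [:0, 1:] ^ m = [:0, 1:] ^ n * char_poly (C * A)"
proof -
  define A' where "A' = map_mat (\<lambda>a. [:a:]) A"
  define C' where "C' = map_mat (\<lambda>a. [:a:]) C"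
  have A': "A' \<in> carrier_mat n m" and C': "C' \<in> carrier_mat m n"
    using A C unfolding A'_def C'_def by auto
  have neg: "map_mat (\<lambda>a. [:-a:]) B = - map_mat (\<lambda>a. [:a:]) B" for B :: "'a mat"
    by (intro eq_matI) auto
  have "char_poly_matrix (A * C) = [:0, 1:] \<cdot>\<^sub>m 1\<^sub>m n - A' * C'"
    unfolding char_poly_matrix_def neg A'_def C'_def map_poly_mult(1)[OF A C, symmetric]
    using A C by (intro eq_matI) auto
  moreover have "char_poly_matrix (C * A) = [:0, 1:] \<cdot>\<^sub>m 1\<^sub>m m - C' * A'"
    unfolding char_poly_matrix_def neg A'_def C'_def map_poly_mult(1)[OF C A, symmetric]
    using A C by (intro eq_matI) auto
  ultimately show ?thesis
    using det_block_schur_complements[OF A' C', of "[:0, 1:]"] unfolding char_poly_def by simp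
qed

definition mat_trace :: "'a::comm_ring_1 mat \<Rightarrow> 'a" where
  "mat_trace A = (\<Sum>i<dim_row A. A $$ (i, i))"

lemma mat_trace_mult_swap:
  fixes A B :: "'a::comm_ring_1 mat"
  assumes A: "A \<in> carrier_mat r c" and B: "B \<in> carrier_mat c r"
  shows "mat_trace (A * B) = mat_trace (B * A)"
proof -
  have "mat_trace (A * B) = (\<Sum>i<r. \<Sum>j<c. A $$ (i, j) * B $$ (j, i))"
    unfolding mat_trace_def using A B by (auto simp: scalar_prod_def atLeast0LessThan intro!: sum.cong)
  also have "\<dots> = (\<Sum>j<c. \<Sum>i<r. B $$ (j, i) * A $$ (i, j))"
    by (subst sum.swap) (simp add: mult.commute)
  also have "\<dots> = mat_trace (B * A)"
    unfolding mat_trace_def using A B by (auto simp: scalar_prod_def atLeast0LessThan intro!: sum.cong)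
  finally show ?thesis .
qed

lemma mat_trace_similar:
  fixes A T :: "'a::comm_ring_1 mat"
  assumes "similar_mat_wit A T P Q"
  shows "mat_trace A = mat_trace T"
proof -
  from similar_mat_witD[OF refl assms] obtain n where
    c: "T \<in> carrier_mat n n" "P \<in> carrier_mat n n" "Q \<in> carrier_mat n n"
    and QP: "Q * P = 1\<^sub>m n" and A: "A = P * T * Q"
    by blast
  have "mat_trace A = mat_trace (Q * (P * T))"
    unfolding A using c by (intro mat_trace_mult_swap[of _ n n]) auto
  also have "Q * (P * T) = T"
    using c QP by (simp add: assoc_mult_mat[of Q n n P n T n, symmetric])
  finally show ?thesis .
qed

lemma mat_trace_upper_triangular:
  fixes T :: "'a::comm_ring_1 mat"
  assumes ut: "upper_triangular T" and T: "T \<in> carrier_mat n n"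
  shows "mat_trace T = sum_list (diag_mat T)"
    and "mat_trace (T * T) = (\<Sum>a\<leftarrow>diag_mat T. a ^ 2)"
proof -
  show "mat_trace T = sum_list (diag_mat T)"
    unfolding mat_trace_def diag_mat_def by (simp add: sum_list_sum_nth atLeast0LessThan)
  have "(T * T) $$ (i, i) = T $$ (i, i) ^ 2" if i: "i < n" for i
  proof -
    have "(T * T) $$ (i, i) = (\<Sum>k\<in>{0..<n}. T $$ (i, k) * T $$ (k, i))"
      using T i by (simp add: scalar_prod_def)
    also have "\<dots> = (\<Sum>k\<in>{i}. T $$ (i, k) * T $$ (k, i))"
    proof (rule sum.mono_neutral_right)
      show "\<forall>k\<in>{0..<n} - {i}. T $$ (i, k) * T $$ (k, i) = 0"
      proof
        fix k assume "k \<in> {0..<n} - {i}"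
        then have "k < i \<or> i < k" "k < n" by auto
        then show "T $$ (i, k) * T $$ (k, i) = 0"
          using ut T i by (auto dest: upper_triangularD)
      qed
    qed (use i in auto)
    finally show ?thesis by (simp add: power2_eq_square)
  qed
  then show "mat_trace (T * T) = (\<Sum>a\<leftarrow>diag_mat T. a ^ 2)"
    unfolding mat_trace_def diag_mat_def using T by (simp add: sum_list_sum_nth atLeast0LessThan)
qed

lemma mat_trace_power_sums:
  fixes A :: "complex mat"
  assumes A: "A \<in> carrier_mat n n" and cp: "char_poly A = (\<Prod>a\<leftarrow>as. [:-a, 1:])"
  shows "mat_trace A = sum_list as" and "mat_trace (A * A) = (\<Sum>a\<leftarrow>as. a ^ 2)"
proof -
  obtain T P Q where "schur_decomposition A as = (T, P, Q)"
    by (cases "schur_decomposition A as") auto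
  from schur_decomposition[OF A cp this]
  have sim: "similar_mat_wit A T P Q" and ut: "upper_triangular T" and diag: "diag_mat T = as"
    by auto
  have T: "T \<in> carrier_mat n n" using similar_mat_witD2[OF A sim] by auto
  show "mat_trace A = sum_list as"
    using mat_trace_similar[OF sim] mat_trace_upper_triangular(1)[OF ut T] diag by simp
  have "similar_mat_wit (A ^\<^sub>m 2) (T ^\<^sub>m 2) P Q" by (rule similar_mat_wit_pow[OF sim])
  moreover have "A ^\<^sub>m 2 = A * A" "T ^\<^sub>m 2 = T * T"
    using A T by (simp_all add: numeral_2_eq_2)
  ultimately have "mat_trace (A * A) = mat_trace (T * T)" by (simp add: mat_trace_similar)
  then show "mat_trace (A * A) = (\<Sum>a\<leftarrow>as. a ^ 2)"
    using mat_trace_upper_triangular(2)[OF ut T] diag by simp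
qed

text \<open>Eigenvalues of a Gram matrix are real and nonnegative: \<open>a \<langle>v,v\<rangle> = \<langle>Bv,Bv\<rangle>\<close>.\<close>
lemma gram_eigenvalue_nonneg:
  fixes B :: "real mat"
  assumes B: "B \<in> carrier_mat n m"
    and ev: "eigenvalue (map_mat complex_of_real (transpose_mat B * B)) a"
  shows "Im a = 0 \<and> 0 \<le> Re a"
proof -
  define Bc where "Bc = map_mat complex_of_real B"
  have Bc: "Bc \<in> carrier_mat n m" using B unfolding Bc_def by auto
  have "map_mat complex_of_real (transpose_mat B * B) = transpose_mat Bc * Bc"
    unfolding Bc_def using B by (simp add: of_real_hom.mat_hom_mult map_mat_transpose)
  with ev obtain v where v: "v \<in> carrier_vec m" "v \<noteq> 0\<^sub>v m"
    and eigen: "(transpose_mat Bc * Bc) *\<^sub>v v = a \<cdot>\<^sub>v v"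
    unfolding eigenvalue_def eigenvector_def using Bc by auto
  define w where "w = Bc *\<^sub>v v"
  have w: "w \<in> carrier_vec n" unfolding w_def carrier_vec_def using Bc by simp
  have conj_w: "Bc *\<^sub>v conjugate v = conjugate w"
    unfolding w_def using Bc v(1)
    by (intro eq_vecI) (auto simp: scalar_prod_def cnj_sum Bc_def)
  have "a * (v \<bullet>c v) = ((transpose_mat Bc * Bc) *\<^sub>v v) \<bullet>c v"
    unfolding eigen using v(1) by (simp add: smult_scalar_prod_distrib[of _ m])
  also have "(transpose_mat Bc * Bc) *\<^sub>v v = transpose_mat Bc *\<^sub>v w"
    unfolding w_def using Bc v(1) by (simp add: assoc_mult_mat_vec[of _ m n _ m])
  also have "(transpose_mat Bc *\<^sub>v w) \<bullet>c v = w \<bullet> (Bc *\<^sub>v conjugate v)"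
    by (rule transpose_vec_mult_scalar[OF Bc _ w]) (use v(1) in simp)
  finally have rayleigh: "a * (v \<bullet>c v) = w \<bullet>c w" unfolding conj_w .
  have vv: "Im (v \<bullet>c v) = 0" "0 < Re (v \<bullet>c v)"
    using conjugate_square_greater_0_vec[OF v(1)] v(2) by (auto simp: less_complex_def)
  have ww: "Im (w \<bullet>c w) = 0" "0 \<le> Re (w \<bullet>c w)"
    using conjugate_square_ge_0_vec[of w] by (auto simp: less_eq_complex_def)
  have "Im a * Re (v \<bullet>c v) = 0" "0 \<le> Re a * Re (v \<bullet>c v)"
    using arg_cong[OF rayleigh, of Im] arg_cong[OF rayleigh, of Re] vv ww by simp_all
  then show ?thesis using vv by (simp add: zero_le_mult_iff)
qed

lemma mat_trace_of_real:
  "A \<in> carrier_mat n n \<Longrightarrow> mat_trace (map_mat complex_of_real A) = complex_of_real (mat_trace A)"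
  unfolding mat_trace_def by simp

lemma gram_spectrum:
  fixes B :: "real mat"
  assumes B: "B \<in> carrier_mat n m"
  defines "K \<equiv> transpose_mat B * B"
  obtains ks where "length ks = m" "\<forall>k\<in>set ks. 0 \<le> k"
    "char_poly K = (\<Prod>k\<leftarrow>ks. [:-k, 1:])"
    "sum_list ks = mat_trace K" "(\<Sum>k\<leftarrow>ks. k ^ 2) = mat_trace (K * K)"
proof -
  have K: "K \<in> carrier_mat m m" unfolding K_def using B by auto
  define Kc where "Kc = map_mat complex_of_real K"
  have Kc: "Kc \<in> carrier_mat m m" unfolding Kc_def using K by auto
  obtain as where cp: "char_poly Kc = (\<Prod>a\<leftarrow>as. [:-a, 1:])" and len: "length as = m"
    using char_poly_factorized[OF Kc] by blast
  have "Im a = 0 \<and> 0 \<le> Re a" if "a \<in> set as" for a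
  proof -
    have "eigenvalue Kc a"
      unfolding eigenvalue_root_char_poly[OF Kc] cp using that by (rule linear_poly_root)
    then show ?thesis using gram_eigenvalue_nonneg[OF B] unfolding Kc_def K_def by blast
  qed
  then obtain ks where as: "as = map complex_of_real ks" and nonneg: "\<forall>k\<in>set ks. 0 \<le> k"
    by (intro that[of "map Re as"]) (auto simp: list_eq_iff_nth_eq complex_eq_iff)
  interpret of_real_poly: map_poly_inj_idom_hom complex_of_real ..
  have "map_poly complex_of_real (char_poly K) = char_poly Kc"
    unfolding Kc_def by (rule of_real_hom.char_poly_hom[symmetric, OF K])
  also have "\<dots> = map_poly complex_of_real (\<Prod>k\<leftarrow>ks. [:-k, 1:])"
    unfolding cp as by (simp add: of_real_poly.hom_prod_list o_def)
  finally have "char_poly K = (\<Prod>k\<leftarrow>ks. [:-k, 1:])" by simp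
  moreover have "complex_of_real (sum_list ks) = complex_of_real (mat_trace K)"
    using mat_trace_power_sums(1)[OF Kc cp] unfolding as Kc_def mat_trace_of_real[OF K]
    by (simp add: o_def)
  moreover have "complex_of_real (\<Sum>k\<leftarrow>ks. k ^ 2) = complex_of_real (mat_trace (K * K))"
  proof -
    have "complex_of_real (\<Sum>k\<leftarrow>ks. k ^ 2) = (\<Sum>a\<leftarrow>as. a ^ 2)"
      unfolding as by (induction ks) simp_all
    also have "\<dots> = mat_trace (Kc * Kc)" using mat_trace_power_sums(2)[OF Kc cp] by simp
    also have "Kc * Kc = map_mat complex_of_real (K * K)"
      unfolding Kc_def by (rule of_real_hom.mat_hom_mult[OF K K, symmetric])
    finally show ?thesis using mat_trace_of_real[OF mult_carrier_mat[OF K K]] by simp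
  qed
  ultimately show thesis using that[of ks] len nonneg as by simp
qed

section \<open>The Laplacian through the oriented incidence matrix\<close>

definition is_matching :: "nat set set \<Rightarrow> bool" where
  "is_matching E \<longleftrightarrow> (\<forall>e1\<in>E. \<forall>e2\<in>E. e1 \<noteq> e2 \<longrightarrow> e1 \<inter> e2 = {})"

lemma sum_indicator_card:
  "finite A \<Longrightarrow> (\<Sum>k\<in>A. if P k then 1 else 0) = real (card {k\<in>A. P k})"
  by (simp add: sum.If_cases Int_def)

text \<open>Orienting each edge
  from its smaller to its larger endpoint gives the oriented incidence matrix \<open>B\<close>
  (\<open>n \<times> m\<close>), with \<open>B B\<^sup>T = L(G)\<close>; the edge Gram matrix \<open>B\<^sup>T B\<close> has \<open>2\<close> on the diagonal and
  a nonzero entry exactly for pairs of edges sharing a vertex.\<close>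
locale enumerated_graph =
  fixes n m :: nat and E :: "nat set set" and ed :: "nat \<Rightarrow> nat set"
  assumes simple: "simple_graph n E" and enum: "bij_betw ed {0..<m} E"
begin

definition incidence :: "real mat" where
  "incidence = mat n m (\<lambda>(u, k). if u = Min (ed k) then 1 else if u = Max (ed k) then -1 else 0)"

definition gram :: "real mat" where
  "gram = transpose_mat incidence * incidence"

lemma incidence_carrier: "incidence \<in> carrier_mat n m"
  unfolding incidence_def by simp

lemma gram_carrier: "gram \<in> carrier_mat m m"
  unfolding gram_def using incidence_carrier by simp

lemma edge_ends:
  assumes "k < m"
  shows "Min (ed k) < n" "Max (ed k) < n" "Min (ed k) \<noteq> Max (ed k)"
    and "ed k = {Min (ed k), Max (ed k)}"
proof -
  have "ed k \<in> E" using enum assms unfolding bij_betw_def by auto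
  then obtain i j where "i < n" "j < n" "i \<noteq> j" "ed k = {i, j}"
    using simple unfolding simple_graph_def by blast
  then show "Min (ed k) < n" "Max (ed k) < n" "Min (ed k) \<noteq> Max (ed k)"
    "ed k = {Min (ed k), Max (ed k)}"
    by (auto simp: min_def max_def)
qed

lemma mem_edge_iff: "k < m \<Longrightarrow> u \<in> ed k \<longleftrightarrow> u = Min (ed k) \<or> u = Max (ed k)"
  using edge_ends(4) by blast

lemma incidence_entry:
  "u < n \<Longrightarrow> k < m \<Longrightarrow>
    incidence $$ (u, k) = (if u = Min (ed k) then 1 else if u = Max (ed k) then -1 else 0)"
  unfolding incidence_def by simp

lemma incidence_nonzero_iff: "u < n \<Longrightarrow> k < m \<Longrightarrow> incidence $$ (u, k) \<noteq> 0 \<longleftrightarrow> u \<in> ed k"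
  using incidence_entry mem_edge_iff by auto

lemma incidence_square:
  "u < n \<Longrightarrow> k < m \<Longrightarrow> incidence $$ (u, k) * incidence $$ (u, k) = (if u \<in> ed k then 1 else 0)"
  using incidence_entry mem_edge_iff by auto

lemma incidence_mixed:
  assumes "i < n" "j < n" "k < m" "i \<noteq> j"
  shows "incidence $$ (i, k) * incidence $$ (j, k) = (if ed k = {i, j} then -1 else 0)"
proof -
  define a b where "a = Min (ed k)" and "b = Max (ed k)"
  have "ed k = {a, b}" "a \<noteq> b" using edge_ends[OF assms(3)] unfolding a_def b_def by simp_all
  then show ?thesis using assms
    unfolding incidence_entry[OF assms(1,3)] incidence_entry[OF assms(2,3)] a_def[symmetric] b_def[symmetric]
    by (auto simp: doubleton_eq_iff)
qed

lemma card_edges_with: "card {k\<in>{0..<m}. P (ed k)} = card {e\<in>E. P e}"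
proof -
  have "inj_on ed {k\<in>{0..<m}. P (ed k)}"
    using enum unfolding bij_betw_def by (auto intro: inj_on_subset)
  moreover have "ed ` {k\<in>{0..<m}. P (ed k)} = {e\<in>E. P e}"
    using enum unfolding bij_betw_def by auto
  ultimately show ?thesis by (metis card_image)
qed

lemma laplacian_factorization: "incidence * transpose_mat incidence = laplacian n E"
proof (rule eq_matI)
  fix i j assume "i < dim_row (laplacian n E)" "j < dim_col (laplacian n E)"
  then have i: "i < n" and j: "j < n" unfolding laplacian_def by auto
  have "(incidence * transpose_mat incidence) $$ (i, j)
      = (\<Sum>k\<in>{0..<m}. incidence $$ (i, k) * incidence $$ (j, k))"
    using i j incidence_carrier by (simp add: scalar_prod_def)
  also have "\<dots> = laplacian n E $$ (i, j)"
  proof (cases "i = j")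
    case True
    have "(\<Sum>k\<in>{0..<m}. incidence $$ (i, k) * incidence $$ (j, k)) = (\<Sum>k\<in>{0..<m}. if i \<in> ed k then 1 else 0)"
      using True incidence_square i by simp
    also have "\<dots> = real (card {k\<in>{0..<m}. i \<in> ed k})" by (rule sum_indicator_card) simp
    finally have "(\<Sum>k\<in>{0..<m}. incidence $$ (i, k) * incidence $$ (j, k)) = real (card {k\<in>{0..<m}. i \<in> ed k})" .
    then show ?thesis using True i card_edges_with[of "\<lambda>e. i \<in> e"]
      unfolding laplacian_def degree_def by simp
  next
    case False
    have "(\<Sum>k\<in>{0..<m}. incidence $$ (i, k) * incidence $$ (j, k))
        = - (\<Sum>k\<in>{0..<m}. if ed k = {i, j} then 1 else 0)"
      unfolding sum_negf[symmetric] using False incidence_mixed i j by (intro sum.cong) auto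
    also have "(\<Sum>k\<in>{0..<m}. if ed k = {i, j} then 1 else 0) = real (card {k\<in>{0..<m}. ed k = {i, j}})"
      by (rule sum_indicator_card) simp
    also have "card {k\<in>{0..<m}. ed k = {i, j}} = (if {i, j} \<in> E then 1 else 0)"
      using card_edges_with[of "\<lambda>e. e = {i, j}"] by (auto simp: Collect_conv_if)
    finally show ?thesis using False i j unfolding laplacian_def by simp
  qed
  finally show "(incidence * transpose_mat incidence) $$ (i, j) = laplacian n E $$ (i, j)" .
qed (use incidence_carrier in \<open>auto simp: laplacian_def\<close>)

lemma incidence_column_sum: "k < m \<Longrightarrow> (\<Sum>u\<in>{0..<n}. incidence $$ (u, k)) = 0"
proof -
  assume k: "k < m"
  define a b where "a = Min (ed k)" and "b = Max (ed k)"
  have ab: "a < n" "b < n" "a \<noteq> b" using edge_ends[OF k] unfolding a_def b_def by simp_all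
  have entry: "incidence $$ (u, k) = (if u = a then 1 else if u = b then -1 else 0)" if "u < n" for u
    using incidence_entry[OF that k] unfolding a_def b_def .
  have "(\<Sum>u\<in>{0..<n}. incidence $$ (u, k)) = (\<Sum>u\<in>{a, b}. incidence $$ (u, k))"
    using ab entry by (intro sum.mono_neutral_right) auto
  then show ?thesis using ab entry by simp
qed

text \<open>Since the columns of the incidence matrix sum to zero, the all-ones vector lies in the
  kernel of the Laplacian and \<open>0\<close> is a root of its characteristic polynomial.\<close>
lemma laplacian_singular:
  assumes "0 < n"
  shows "[:0, 1:] dvd char_poly (laplacian n E)"
proof -
  define w :: "real vec" where "w = vec n (\<lambda>_. 1)"
  have w: "w \<in> carrier_vec n" "w \<noteq> 0\<^sub>v n"
    using assms unfolding w_def by (auto simp: vec_eq_iff)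
  have "transpose_mat incidence *\<^sub>v w = 0\<^sub>v m"
    using incidence_carrier incidence_column_sum unfolding w_def
    by (intro eq_vecI) (auto simp: scalar_prod_def)
  then have "laplacian n E *\<^sub>v w = 0 \<cdot>\<^sub>v w"
    unfolding laplacian_factorization[symmetric] using incidence_carrier w
    by (auto simp: assoc_mult_mat_vec[of _ n m _ n] intro!: eq_vecI)
  then have "eigenvalue (laplacian n E) 0"
    unfolding eigenvalue_def eigenvector_def using w by (auto simp: laplacian_def)
  then have "poly (char_poly (laplacian n E)) 0 = 0"
    using eigenvalue_root_char_poly[of "laplacian n E" n] by (simp add: laplacian_def)
  then show ?thesis by (simp add: poly_eq_0_iff_dvd)
qed

lemma gram_entry:
  "k < m \<Longrightarrow> l < m \<Longrightarrow> gram $$ (k, l) = (\<Sum>u\<in>{0..<n}. incidence $$ (u, k) * incidence $$ (u, l))"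
  unfolding gram_def using incidence_carrier by (simp add: scalar_prod_def)

lemma gram_diag: "k < m \<Longrightarrow> gram $$ (k, k) = 2"
proof -
  assume k: "k < m"
  have "gram $$ (k, k) = (\<Sum>u\<in>{0..<n}. if u \<in> ed k then 1 else 0)"
    unfolding gram_entry[OF k k] using incidence_square k by (intro sum.cong) auto
  also have "\<dots> = real (card {u\<in>{0..<n}. u \<in> ed k})" by (rule sum_indicator_card) simp
  also have "{u\<in>{0..<n}. u \<in> ed k} = {Min (ed k), Max (ed k)}"
    using edge_ends[OF k] mem_edge_iff[OF k] by auto
  finally show ?thesis using edge_ends(3)[OF k] by simp
qed

text \<open>Two distinct edges contribute an off-diagonal entry of the Gram matrix exactly when
  they share a vertex (a simple graph has no parallel edges, so they share at most one).\<close>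
lemma gram_offdiag_eq_0_iff:
  assumes k: "k < m" and l: "l < m" and "k \<noteq> l"
  shows "gram $$ (k, l) = 0 \<longleftrightarrow> ed k \<inter> ed l = {}"
proof
  assume disjoint: "ed k \<inter> ed l = {}"
  show "gram $$ (k, l) = 0"
    unfolding gram_entry[OF k l]
  proof (intro sum.neutral ballI)
    fix u assume "u \<in> {0..<n}"
    then show "incidence $$ (u, k) * incidence $$ (u, l) = 0"
      using incidence_nonzero_iff[of u k] incidence_nonzero_iff[of u l] k l disjoint by auto
  qed
next
  assume zero: "gram $$ (k, l) = 0"
  show "ed k \<inter> ed l = {}"
  proof (rule ccontr)
    assume "ed k \<inter> ed l \<noteq> {}"
    then obtain v where v: "v \<in> ed k" "v \<in> ed l" by blast
    have "ed k \<noteq> ed l" using enum k l \<open>k \<noteq> l\<close> unfolding bij_betw_def inj_on_def by auto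
    then have only_v: "u = v" if "u \<in> ed k" "u \<in> ed l" for u
      using that v mem_edge_iff[OF k] mem_edge_iff[OF l] edge_ends(4)[OF k] edge_ends(4)[OF l]
      by (metis doubleton_eq_iff)
    have v_n: "v < n" using v mem_edge_iff[OF k] edge_ends[OF k] by auto
    have "gram $$ (k, l) = (\<Sum>u\<in>{v}. incidence $$ (u, k) * incidence $$ (u, l))"
      unfolding gram_entry[OF k l]
    proof (rule sum.mono_neutral_right)
      show "\<forall>u\<in>{0..<n} - {v}. incidence $$ (u, k) * incidence $$ (u, l) = 0"
        using incidence_nonzero_iff[OF _ k] incidence_nonzero_iff[OF _ l] only_v by fastforce
    qed (use v_n in auto)
    then show False using zero v v_n incidence_nonzero_iff[OF v_n k] incidence_nonzero_iff[OF v_n l] by simp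
  qed
qed

lemma gram_symmetric: "k < m \<Longrightarrow> l < m \<Longrightarrow> gram $$ (l, k) = gram $$ (k, l)"
  using gram_entry by (simp add: mult.commute)

lemma gram_trace: "mat_trace gram = 2 * real m"
  unfolding mat_trace_def using gram_carrier gram_diag by simp

lemma matching_iff_enumerated_disjoint:
  "is_matching E \<longleftrightarrow> (\<forall>k<m. \<forall>l<m. k \<noteq> l \<longrightarrow> ed k \<inter> ed l = {})"
proof
  assume matching: "is_matching E"
  show "\<forall>k<m. \<forall>l<m. k \<noteq> l \<longrightarrow> ed k \<inter> ed l = {}"
  proof (intro allI impI)
    fix k l assume "k < m" "l < m" "k \<noteq> l"
    then have "ed k \<in> E" "ed l \<in> E" "ed k \<noteq> ed l"
      using enum unfolding bij_betw_def inj_on_def by auto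
    then show "ed k \<inter> ed l = {}" using matching unfolding is_matching_def by blast
  qed
next
  assume disjoint: "\<forall>k<m. \<forall>l<m. k \<noteq> l \<longrightarrow> ed k \<inter> ed l = {}"
  show "is_matching E" unfolding is_matching_def
  proof (intro ballI impI)
    fix e1 e2 assume e: "e1 \<in> E" "e2 \<in> E" "e1 \<noteq> e2"
    have E_eq: "E = ed ` {0..<m}" using enum by (simp add: bij_betw_def)
    obtain k where "k < m" "e1 = ed k" using e(1) unfolding E_eq by auto
    moreover obtain l where "l < m" "e2 = ed l" using e(2) unfolding E_eq by auto
    ultimately show "e1 \<inter> e2 = {}" using disjoint \<open>e1 \<noteq> e2\<close> by auto
  qed
qed

abbreviation gram_offdiag_sq :: real where
  "gram_offdiag_sq \<equiv> (\<Sum>k<m. \<Sum>l\<in>{..<m} - {k}. (gram $$ (k, l))\<^sup>2)"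

lemma gram_trace_square: "mat_trace (gram * gram) = 4 * real m + gram_offdiag_sq"
proof -
  have "mat_trace (gram * gram) = (\<Sum>k<m. \<Sum>l<m. (gram $$ (k, l))\<^sup>2)"
    unfolding mat_trace_def using gram_carrier gram_symmetric
    by (auto simp: scalar_prod_def atLeast0LessThan power2_eq_square intro!: sum.cong)
  also have "\<dots> = (\<Sum>k<m. 4 + (\<Sum>l\<in>{..<m} - {k}. (gram $$ (k, l))\<^sup>2))"
    by (intro sum.cong refl) (simp add: sum.remove[of "{..<m}"] gram_diag)
  finally show ?thesis by (simp add: sum.distrib)
qed

lemma gram_offdiag_sq_eq_0_iff: "gram_offdiag_sq = 0 \<longleftrightarrow> is_matching E"
proof -
  have "gram_offdiag_sq = 0 \<longleftrightarrow> (\<forall>k<m. \<forall>l<m. k \<noteq> l \<longrightarrow> gram $$ (k, l) = 0)"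
    by (simp add: sum_nonneg_eq_0_iff sum_nonneg; blast)
  also have "\<dots> \<longleftrightarrow> (\<forall>k<m. \<forall>l<m. k \<noteq> l \<longrightarrow> ed k \<inter> ed l = {})"
    using gram_offdiag_eq_0_iff by auto
  also have "\<dots> \<longleftrightarrow> is_matching E"
    by (rule matching_iff_enumerated_disjoint[symmetric])
  finally show ?thesis .
qed

end

section \<open>The edge spectrum of a graph\<close>

text \<open>For a graph with \<open>m\<close> edges on \<open>n\<close> vertices, Sylvester's identity gives
  \<open>\<chi>\<^sub>L(X) X\<^sup>m = X\<^sup>n \<chi>\<^sub>K(X)\<close> where \<open>K = B\<^sup>T B\<close> is the edge Gram matrix. We call the \<open>m\<close>
  eigenvalues of \<open>K\<close> the edge spectrum: the nonzero Laplacian eigenvalues padded with zeros.\<close>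

definition lap_edge_spectrum :: "nat \<Rightarrow> nat set set \<Rightarrow> real list \<Rightarrow> bool" where
  "lap_edge_spectrum n E ks \<longleftrightarrow> length ks = card E \<and> (\<forall>k\<in>set ks. 0 \<le> k)
     \<and> [:0, 1:] dvd char_poly (laplacian n E)
     \<and> char_poly (laplacian n E) * [:0, 1:] ^ card E = [:0, 1:] ^ n * (\<Prod>k\<leftarrow>ks. [:-k, 1:])"

lemma sum_sq_deviation:
  "(\<Sum>k\<leftarrow>ks. (k - c)\<^sup>2) = (\<Sum>k\<leftarrow>ks. k\<^sup>2) - 2 * c * sum_list ks + c\<^sup>2 * real (length ks)"
  for c :: real
  by (induction ks) (auto simp: algebra_simps power2_eq_square)

lemma sum_sq_deviation_eq_0_iff:
  "(\<Sum>k\<leftarrow>ks. (k - c)\<^sup>2) = 0 \<longleftrightarrow> ks = replicate (length ks) c"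
  for c :: real
proof -
  have "(\<Sum>k\<leftarrow>ks. (k - c)\<^sup>2) = 0 \<longleftrightarrow> (\<forall>x\<in>set (map (\<lambda>k. (k - c)\<^sup>2) ks). x = 0)"
    by (rule sum_list_nonneg_eq_0_iff) auto
  also have "\<dots> \<longleftrightarrow> (\<forall>k\<in>set ks. k = c)" by simp
  also have "\<dots> \<longleftrightarrow> ks = replicate (length ks) c"
    by (metis in_set_replicate replicate_length_same)
  finally show ?thesis .
qed

text \<open>Every graph with a vertex has an edge spectrum with sum \<open>2m\<close> (the trace of \<open>K\<close>); by
  \<open>\<Sum>(k - 2)\<^sup>2 = tr K\<^sup>2 - 4m\<close>, it is constantly \<open>2\<close> exactly for matchings.\<close>
lemma laplacian_edge_spectrum:
  assumes simple: "simple_graph n E" and "0 < n"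
  obtains ks where "lap_edge_spectrum n E ks" "sum_list ks = 2 * real (card E)"
    "ks = replicate (card E) 2 \<longleftrightarrow> is_matching E"
proof -
  have "E \<subseteq> Pow {0..<n}" using simple unfolding simple_graph_def by auto
  then have "finite E" by (rule finite_subset) simp
  then obtain ed where "bij_betw ed {0..<card E} E" using ex_bij_betw_nat_finite by blast
  then interpret G: enumerated_graph n "card E" E ed using simple by unfold_locales
  obtain ks where len: "length ks = card E" and nonneg: "\<forall>k\<in>set ks. 0 \<le> k"
    and cp: "char_poly G.gram = (\<Prod>k\<leftarrow>ks. [:-k, 1:])"
    and tr: "sum_list ks = mat_trace G.gram" and tr2: "(\<Sum>k\<leftarrow>ks. k\<^sup>2) = mat_trace (G.gram * G.gram)"
    using gram_spectrum[OF G.incidence_carrier] unfolding G.gram_def by blast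
  have "transpose_mat G.incidence \<in> carrier_mat (card E) n" using G.incidence_carrier by simp
  from char_poly_mult_swap[OF G.incidence_carrier this]
  have "char_poly (laplacian n E) * [:0, 1:] ^ card E = [:0, 1:] ^ n * (\<Prod>k\<leftarrow>ks. [:-k, 1:])"
    unfolding G.laplacian_factorization cp[unfolded G.gram_def] .
  then have spectrum: "lap_edge_spectrum n E ks"
    unfolding lap_edge_spectrum_def using len nonneg G.laplacian_singular[OF \<open>0 < n\<close>] by blast
  have sum: "sum_list ks = 2 * real (card E)" using tr G.gram_trace by simp
  have "(\<Sum>k\<leftarrow>ks. (k - 2)\<^sup>2) = G.gram_offdiag_sq"
    unfolding sum_sq_deviation tr2 G.gram_trace_square sum len by simp
  then have "ks = replicate (card E) 2 \<longleftrightarrow> is_matching E"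
    using sum_sq_deviation_eq_0_iff[of 2 ks] G.gram_offdiag_sq_eq_0_iff len by simp
  with spectrum sum show thesis by (rule that)
qed

lemma coeff_xpow_mult:
  "coeff ([:0, 1:] ^ k * p) j = (if j < k then 0 else coeff p (j - k))"
  for p :: "'a::comm_semiring_1 poly"
proof -
  have "[:0, 1:] ^ k = (monom 1 k :: 'a poly)" by (simp add: monom_altdef)
  then show ?thesis by (simp add: coeff_monom_mult)
qed

lemma lap_edge_spectrumD:
  assumes "lap_edge_spectrum n E ks"
  shows "length ks = card E" "\<forall>k\<in>set ks. 0 \<le> k" "[:0, 1:] dvd char_poly (laplacian n E)"
    "char_poly (laplacian n E) * [:0, 1:] ^ card E = [:0, 1:] ^ n * (\<Prod>k\<leftarrow>ks. [:-k, 1:])"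
  using assms unfolding lap_edge_spectrum_def by auto

context
  fixes n :: nat and E :: "nat set set" and ks :: "real list"
  assumes spectrum: "lap_edge_spectrum n E ks"
begin

private lemma lap_poly_identity:
  "[:0, 1:] ^ Suc (card E) * lap_poly n E = [:0, 1:] ^ n * (\<Prod>k\<leftarrow>ks. [:-k, 1:])"
proof -
  have "char_poly (laplacian n E) = [:0, 1:] * lap_poly n E"
    unfolding lap_poly_def by (rule dvd_mult_div_cancel[symmetric, OF lap_edge_spectrumD(3)[OF spectrum]])
  then show ?thesis using lap_edge_spectrumD(4)[OF spectrum] by (simp add: algebra_simps)
qed

lemma lap_coeff_spectrum: "lap_coeff n E s = esym ks s"
proof -
  define m where "m = card E"
  define Q where "Q = (\<Prod>k\<leftarrow>ks. [:-k, 1:])"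
  have len: "length ks = m" using lap_edge_spectrumD(1)[OF spectrum] unfolding m_def .
  have key: "(if j < Suc m then 0 else coeff (lap_poly n E) (j - Suc m)) = (if j < n then 0 else coeff Q (j - n))"
    for j using arg_cong[OF lap_poly_identity, of "\<lambda>p. coeff p j"]
    unfolding coeff_xpow_mult m_def Q_def .
  have esym_coeff: "s \<le> m \<Longrightarrow> coeff Q (m - s) = (-1) ^ s * esym ks s"
    using coeff_prod_linear_factors[of s ks] len unfolding Q_def by simp
  show ?thesis
  proof (cases "s < n")
    case True
    then have "\<not> n + m - s < Suc m" "n + m - s - Suc m = n - 1 - s"
      "n + m - s < n \<longleftrightarrow> m < s" "n + m - s - n = m - s" by auto
    then have "coeff (lap_poly n E) (n - 1 - s) = (if m < s then 0 else coeff Q (m - s))"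
      using key[of "n + m - s"] by simp
    then show ?thesis using True esym_coeff len
      by (auto simp: lap_coeff_def esym_eq_0_beyond_length)
  next
    case False
    have "esym ks s = 0"
    proof (cases "s \<le> m")
      case True
      then have "n + m - s < Suc m" "\<not> n + m - s < n" "n + m - s - n = m - s" using False by auto
      then have "coeff Q (m - s) = 0" using key[of "n + m - s"] by simp
      then show ?thesis using esym_coeff[OF True] by simp
    qed (use len esym_eq_0_beyond_length in simp)
    then show ?thesis using False by (simp add: lap_coeff_def)
  qed
qed

lemma lap_Phi_spectrum:
  assumes x: "0 < x"
  shows "lap_Phi n E x = (\<Prod>k\<leftarrow>ks. x - k)"
proof -
  have poly_eq: "x ^ Suc (card E) * poly (lap_poly n E) x = x ^ n * (\<Prod>k\<leftarrow>ks. x - k)"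
    using arg_cong[OF lap_poly_identity, of "\<lambda>p. poly p x"] by (simp add: poly_prod_list o_def)
  have exponent: "int (card E) - int n + 1 = int (Suc (card E)) - int n" by simp
  have "x powi (int (card E) - int n + 1) = x powi int (Suc (card E)) / x powi int n"
    unfolding exponent using x by (intro power_int_diff) simp
  also have "\<dots> = x ^ Suc (card E) / x ^ n" by (simp only: power_int_of_nat)
  finally have "lap_Phi n E x = x ^ Suc (card E) * poly (lap_poly n E) x / x ^ n"
    unfolding lap_Phi_def by simp
  also have "\<dots> = (\<Prod>k\<leftarrow>ks. x - k)" unfolding poly_eq using x by simp
  finally show ?thesis .
qed

lemma lap_eigenvalues_spectrum: "{y. eigenvalue (laplacian n E) y} = insert 0 (set ks)"
proof -
  let ?\<chi> = "char_poly (laplacian n E)"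
  have L: "laplacian n E \<in> carrier_mat n n" unfolding laplacian_def by simp
  have "poly ?\<chi> y = 0 \<longleftrightarrow> y = 0 \<or> y \<in> set ks" for y
  proof (cases "y = 0")
    case True
    then show ?thesis using lap_edge_spectrumD(3)[OF spectrum] by (simp add: poly_eq_0_iff_dvd)
  next
    case False
    have "poly ?\<chi> y * y ^ card E = y ^ n * (\<Prod>k\<leftarrow>ks. y - k)"
      using arg_cong[OF lap_edge_spectrumD(4)[OF spectrum], of "\<lambda>p. poly p y"]
      by (simp add: poly_prod_list o_def)
    moreover have "(\<Prod>k\<leftarrow>ks. y - k) = 0 \<longleftrightarrow> y \<in> set ks"
      by (auto simp: prod_list_zero_iff)
    ultimately show ?thesis using False by (metis mult_eq_0_iff power_eq_0_iff)
  qed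
  then show ?thesis using eigenvalue_root_char_poly[OF L] by auto
qed

lemma lap_lambda_spectrum: "lap_lambda n E = Max (insert 0 (set ks))"
  unfolding lap_lambda_def lap_eigenvalues_spectrum ..

lemma lap_lambda_ge: "k \<in> set ks \<Longrightarrow> k \<le> lap_lambda n E"
  unfolding lap_lambda_spectrum by simp

end

lemma matching_edges_graph:
  shows "simple_graph (2 * m) (matching_edges m)" "card (matching_edges m) = m"
    and "is_matching (matching_edges m)"
proof -
  have M: "matching_edges m = (\<lambda>i. {2 * i, 2 * i + 1}) ` {..<m}"
    unfolding matching_edges_def by blast
  have half: "x \<in> {2 * i, 2 * i + 1} \<Longrightarrow> x div 2 = i" for x i :: nat by auto
  show "simple_graph (2 * m) (matching_edges m)"
    unfolding simple_graph_def M
  proof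
    fix e assume "e \<in> (\<lambda>i. {2 * i, 2 * i + 1}) ` {..<m}"
    then obtain i where "i < m" "e = {2 * i, 2 * i + 1}" by blast
    then show "e \<in> {e. \<exists>i j. i < 2 * m \<and> j < 2 * m \<and> i \<noteq> j \<and> e = {i, j}}"
      by (intro CollectI exI[of _ "2 * i"] exI[of _ "2 * i + 1"]) simp
  qed
  have "inj_on (\<lambda>i. {2 * i, 2 * i + 1 :: nat}) {..<m}"
  proof (rule inj_onI)
    fix i j :: nat assume "{2 * i, 2 * i + 1} = {2 * j, 2 * j + 1}"
    then have "2 * i \<in> {2 * j, 2 * j + 1}" by blast
    then show "i = j" using half[of "2 * i" j] by simp
  qed
  then show "card (matching_edges m) = m" unfolding M by (simp add: card_image)
  show "is_matching (matching_edges m)"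
    unfolding is_matching_def M
  proof (intro ballI impI)
    fix e1 e2 assume "e1 \<in> (\<lambda>i. {2 * i, 2 * i + 1}) ` {..<m}" "e2 \<in> (\<lambda>i. {2 * i, 2 * i + 1}) ` {..<m}"
      and "e1 \<noteq> e2"
    then obtain i j where ij: "e1 = {2 * i, 2 * i + 1}" "e2 = {2 * j, 2 * j + 1}" "i \<noteq> j" by blast
    show "e1 \<inter> e2 = {}"
    proof (rule ccontr)
      assume "e1 \<inter> e2 \<noteq> {}"
      then obtain x where "x \<in> e1" "x \<in> e2" by blast
      then show False using half[of x i] half[of x j] ij by simp
    qed
  qed
qed

lemma high_degree_not_matching:
  assumes "degree E v \<ge> 2"
  shows "\<not> is_matching E"
proof -
  obtain S where "S \<subseteq> {e\<in>E. v \<in> e}" "card S = 2"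
    using assms unfolding degree_def by (meson obtain_subset_with_card_n)
  then obtain e1 e2 where "e1 \<in> E" "e2 \<in> E" "v \<in> e1" "v \<in> e2" "e1 \<noteq> e2"
    by (auto simp: card_2_iff)
  then show ?thesis unfolding is_matching_def by blast
qed

lemma matching_edge_spectrum:
  assumes "0 < m"
  shows "lap_edge_spectrum (2 * m) (matching_edges m) (replicate m 2)"
proof -
  have "0 < 2 * m" using assms by simp
  then obtain ks where "lap_edge_spectrum (2 * m) (matching_edges m) ks"
    and "ks = replicate m 2 \<longleftrightarrow> is_matching (matching_edges m)"
    using laplacian_edge_spectrum[OF matching_edges_graph(1)] unfolding matching_edges_graph(2) by blast
  then show ?thesis using matching_edges_graph(3) by simp
qed

lemma non_matching_edge_spectrum:
  assumes "simple_graph n E" and "v < n" and "degree E v \<ge> 2"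
  obtains ks z where "lap_edge_spectrum n E ks" "sum_list ks = of_nat (length ks) * 2"
    "z \<in> set ks" "z \<noteq> 2"
proof -
  obtain ks where ks: "lap_edge_spectrum n E ks" "sum_list ks = 2 * real (card E)"
    and const: "ks = replicate (card E) 2 \<longleftrightarrow> is_matching E"
    using laplacian_edge_spectrum[OF assms(1)] assms(2) by (metis gr_zeroI not_less_zero)
  have len: "length ks = card E" using lap_edge_spectrumD(1)[OF ks(1)] .
  then have "ks \<noteq> replicate (length ks) 2" using const high_degree_not_matching[OF assms(3)] by simp
  then obtain z where "z \<in> set ks" "z \<noteq> 2" by (metis replicate_length_same)
  moreover have "sum_list ks = of_nat (length ks) * 2" using ks(2) len by simp
  ultimately show thesis using ks(1) that by blast
qed

text \<open>The edge spectrum of the matching \<open>M\<close> is the constant list \<open>2, \<dots>, 2\<close>, while that of \<open>G\<close>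
  has the same length and mean but is not constant. The three claims are then the
  Maclaurin-type inequality, \<open>\<lambda>(G) \<ge> max ks > 2 = \<lambda>(M)\<close>, and the product inequality.\<close>
theorem mainTheorem1:
  fixes m n :: nat and E :: "nat set set"
  assumes "m \<ge> 2"
    and "simple_graph n E"
    and "card E = m"
    and "\<exists>v < n. degree E v \<ge> 2"
  shows "(\<forall>s \<in> {2..m}. lap_coeff (2 * m) (matching_edges m) s > lap_coeff n E s)
       \<and> lap_lambda (2 * m) (matching_edges m) \<le> lap_lambda n E
       \<and> (\<forall>x::real. x \<ge> lap_lambda n E \<longrightarrow>
            lap_Phi (2 * m) (matching_edges m) x > lap_Phi n E x)"
proof -
  obtain ks z where G: "lap_edge_spectrum n E ks" and mean: "sum_list ks = of_nat (length ks) * 2"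
    and z: "z \<in> set ks" "z \<noteq> 2"
    using assms(2,4) non_matching_edge_spectrum by blast
  have M: "lap_edge_spectrum (2 * m) (matching_edges m) (replicate m 2)"
    using assms(1) by (intro matching_edge_spectrum) simp
  have len: "length ks = m" using lap_edge_spectrumD(1)[OF G] assms(3) by simp
  obtain b where b: "b \<in> set ks" "2 < b" using exists_below_above_mean[OF mean z] by blast
  have lambda_M: "lap_lambda (2 * m) (matching_edges m) = 2"
    using assms(1) unfolding lap_lambda_spectrum[OF M] by simp
  have lambda_G: "2 < lap_lambda n E" using lap_lambda_ge[OF G b(1)] b(2) by simp
  show ?thesis
  proof (intro conjI ballI allI impI)
    fix s assume "s \<in> {2..m}"
    then show "lap_coeff (2 * m) (matching_edges m) s > lap_coeff n E s"
      unfolding lap_coeff_spectrum[OF G] lap_coeff_spectrum[OF M]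
      using esym_lt_replicate_mean[OF lap_edge_spectrumD(2)[OF G] mean z] len by simp
  next
    show "lap_lambda (2 * m) (matching_edges m) \<le> lap_lambda n E" using lambda_M lambda_G by simp
  next
    fix x :: real assume x: "x \<ge> lap_lambda n E"
    then have x0: "0 < x" and "\<forall>k\<in>set ks. k \<le> x" using lambda_G lap_lambda_ge[OF G] by force+
    then show "lap_Phi (2 * m) (matching_edges m) x > lap_Phi n E x"
      unfolding lap_Phi_spectrum[OF G x0] lap_Phi_spectrum[OF M x0]
      using prod_lt_replicate_mean[OF _ mean z] len by simp
  qed
qed

end
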